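(* Let $U=U_1\times\cdots\times U_m\subset\mathbb{R}^m_+$ (each $U_i\subseteq\mathbb{R}$) be a convex set, $C\subseteq\mathbb{R}^m$, $\overline{U}=U\cap C$. Let $\rho_{\rm ro}=\rho(U^\downarrow,\Pi(\overline{U}^\downarrow))$, $\gamma_{\rm ro}=\gamma(U^\downarrow,\Pi(\overline{U}^\downarrow))$, $\rho_{\rm aro}=\rho(U^\downarrow,\overline{U}^\downarrow)$, $\gamma_{\rm aro}=\gamma(U^\downarrow,\overline{U}^\downarrow)$. Then $\rho_{\rm ro}\ge\rho_{\rm aro}$ and $\gamma_{\rm ro}=\gamma_{\rm aro}$.
   Context: For $S\subseteq\mathbb{R}^m_+$, $S^\downarrow=\{t\in\mathbb{R}^m_+:\exists s\in S,\ t\le s\text{ componentwise}\}$. $\Pi_i(S)$ is the projection of $S$ onto coordinate $i$ and $\Pi(S)=\Pi_1(S)\times\cdots\times\Pi_m(S)$. For $r\ge0$, $rS=\{rx:x\in S\}$; $\rho(S_1,S_2)=\max\{\rho\ge0:\rho S_1\subseteq S_2\}$, $\gamma(S_1,S_2)=\min\{\gamma\ge0:S_2\subseteq\gamma S_1\}$. *)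

theory Defs
  imports "HOL-Analysis.Analysis"
begin

definition nonneg_orthant :: "(real^'m) set" where
  "nonneg_orthant = {x. \<forall>i. 0 \<le> x $ i}"

definition down :: "(real^'m) set \<Rightarrow> (real^'m) set" where
  "down S = {t \<in> nonneg_orthant. \<exists>s\<in>S. \<forall>i. t $ i \<le> s $ i}"

definition proj :: "'m \<Rightarrow> (real^'m) set \<Rightarrow> real set" where
  "proj i S = (\<lambda>x. x $ i) ` S"

definition proj_box :: "(real^'m) set \<Rightarrow> (real^'m) set" where
  "proj_box S = {x. \<forall>i. x $ i \<in> proj i S}"

definition scale_set :: "real \<Rightarrow> (real^'m) set \<Rightarrow> (real^'m) set" where
  "scale_set r S = (\<lambda>x. r *\<^sub>R x) ` S"

text \<open>rho and gamma, valued in the extended reals (sup / inf; the inf of the empty set is \<infinity>).\<close>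
definition rho :: "(real^'m) set \<Rightarrow> (real^'m) set \<Rightarrow> ereal" where
  "rho S1 S2 = Sup (ereal ` {r. r \<ge> 0 \<and> scale_set r S1 \<subseteq> S2})"

definition gamma :: "(real^'m) set \<Rightarrow> (real^'m) set \<Rightarrow> ereal" where
  "gamma S1 S2 = Inf (ereal ` {g. g \<ge> 0 \<and> S2 \<subseteq> scale_set g S1})"

end

theory Submission
  imports Defs
begin

text \<open>The projection box of a set only enlarges it, and scaled downward closures of a product
  set are again product sets. So a scaled copy of \<open>U\<^sup>\<down>\<close> contains \<open>\<Pi>(W)\<close> exactly when it
  contains \<open>W\<close>, which makes the two \<open>\<gamma>\<close>'s equal; the inequality for \<open>\<rho>\<close> is monotonicity
  of \<open>\<rho>\<close> in its second argument.\<close>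

lemma subset_proj_box: "S \<subseteq> proj_box S"
  unfolding proj_box_def proj_def by auto

lemma proj_box_mono: "S \<subseteq> T \<Longrightarrow> proj_box S \<subseteq> proj_box T"
  unfolding proj_box_def proj_def by blast

lemma proj_box_subset_iff:
  assumes "proj_box B \<subseteq> B"
  shows "proj_box S \<subseteq> B \<longleftrightarrow> S \<subseteq> B"
  using assms subset_proj_box proj_box_mono by blast

lemma proj_box_scale_set:
  fixes S :: "(real^'m::finite) set"
  assumes box: "proj_box S \<subseteq> S"
  shows "proj_box (scale_set r S) \<subseteq> scale_set r S"
proof
  fix x assume "x \<in> proj_box (scale_set r S)"
  then have "\<forall>i. \<exists>y\<in>S. x $ i = r * y $ i"
    unfolding proj_box_def proj_def scale_set_def by fastforce
  then obtain y where y: "\<And>i. y i \<in> S \<and> x $ i = r * y i $ i"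
    by metis
  have "(\<chi> i. y i $ i) \<in> S"
    using box y unfolding proj_box_def proj_def by auto
  moreover have "x = r *\<^sub>R (\<chi> i. y i $ i)"
    using y by (simp add: vec_eq_iff)
  ultimately show "x \<in> scale_set r S"
    unfolding scale_set_def by blast
qed

lemma proj_box_down_product:
  fixes A :: "'m::finite \<Rightarrow> real set"
  shows "proj_box (down {x. \<forall>i. x $ i \<in> A i}) \<subseteq> down {x. \<forall>i. x $ i \<in> A i}"
proof
  fix t assume t: "t \<in> proj_box (down {x. \<forall>i. x $ i \<in> A i})"
  have "0 \<le> t $ i \<and> (\<exists>s. (\<forall>j. s $ j \<in> A j) \<and> t $ i \<le> s $ i)" for i
  proof -
    obtain y where "y \<in> down {x. \<forall>i. x $ i \<in> A i}" and "t $ i = y $ i"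
      using t unfolding proj_box_def proj_def by blast
    then show ?thesis
      unfolding down_def nonneg_orthant_def by force
  qed
  then obtain s where s: "\<And>i. 0 \<le> t $ i \<and> (\<forall>j. s i $ j \<in> A j) \<and> t $ i \<le> s i $ i"
    by metis
  then have "(\<chi> i. s i $ i) \<in> {x. \<forall>i. x $ i \<in> A i}" and "\<forall>i. t $ i \<le> (\<chi> i. s i $ i) $ i"
    by auto
  with s show "t \<in> down {x. \<forall>i. x $ i \<in> A i}"
    unfolding down_def nonneg_orthant_def by blast
qed

lemma rho_mono_right: "S2 \<subseteq> T2 \<Longrightarrow> rho S1 S2 \<le> rho S1 T2"
  unfolding rho_def by (intro Sup_subset_mono image_mono) auto

lemma gamma_proj_box:
  fixes S1 S2 :: "(real^'m::finite) set"
  assumes "proj_box S1 \<subseteq> S1"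
  shows "gamma S1 (proj_box S2) = gamma S1 S2"
  unfolding gamma_def
  using proj_box_subset_iff[OF proj_box_scale_set[OF assms]] by simp

theorem corollary6:
  fixes Ucomp :: "'m::finite \<Rightarrow> real set"
    and U C :: "(real^'m) set"
  assumes U_def: "U = {x. \<forall>i. x $ i \<in> Ucomp i}"
    and U_pos: "U \<subseteq> nonneg_orthant"
    and U_convex: "convex U"
  shows "rho (down U) (proj_box (down (U \<inter> C))) \<ge> rho (down U) (down (U \<inter> C))
       \<and> gamma (down U) (proj_box (down (U \<inter> C))) = gamma (down U) (down (U \<inter> C))"
proof
  show "rho (down U) (proj_box (down (U \<inter> C))) \<ge> rho (down U) (down (U \<inter> C))"
    by (intro rho_mono_right subset_proj_box)
  show "gamma (down U) (proj_box (down (U \<inter> C))) = gamma (down U) (down (U \<inter> C))"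
    unfolding U_def by (intro gamma_proj_box proj_box_down_product)
qed

end
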